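(* Under the standing assumptions below, for every position $\mathbf v\in\mathsf{P}$, either $\mathrm{val}(\mathbf v)=\mathsf{\Omega}$ or $\mathrm{val}(\mathbf v)<\omega_1$ (the first uncountable ordinal).
   Context: Standing assumptions: $(\mathcal{X}_t)_{t\ge1}$ Polish, $(\mathcal{Y}_t)_{t\ge1}$ countable; game: in round $t$, $\mathrm{P_A}$ plays $x_t\in\mathcal{X}_t$ then $\mathrm{P_L}$ plays $y_t\in\mathcal{Y}_t$; $\mathrm{P_L}$ wins iff the play lies in $\mathsf{W}\subseteq\prod_{t\ge1}(\mathcal{X}_t\times\mathcal{Y}_t)$, where $\mathsf{W}$ is coanalytic and finitely decidable (every element of $\mathsf{W}$ has a finite prefix all of whose continuations lie in $\mathsf{W}$); $\mathrm{P_L}$ has a winning strategy. Definitions: $\mathsf{P}_n=\prod_{t=1}^n(\mathcal{X}_t\times\mathcal{Y}_t)$ (with $\mathsf P_0=\{\varnothing\}$), $\mathsf{P}=\bigcup_{n\ge0}\mathsf{P}_n$ (positions). A position $\mathbf v\in\mathsf P_n$ is active if some continuation $\mathbf w\in\prod_{t>n}(\mathcal{X}_t\times\mathcal{Y}_t)$ has $(\mathbf v,\mathbf w)\notin\mathsf{W}$; $\mathsf A_n\subseteq\mathsf P_n$ is the set of active positions, $\mathsf A=\bigcup_n\mathsf A_n$. For $\mathbf v\in\mathsf P_k$, a decision tree of depth $n$ with starting position $\mathbf v$ is a collection $\mathbf t=\{x_{\mathbf y}\in\mathcal{X}_{k+s+1}:\mathbf y\in\prod_{r=k+1}^{k+s}\mathcal{Y}_r,\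 0\le s<n\}$ ($\mathbf t=\varnothing$ is the tree of depth 0); it is active if $(\mathbf v,x_\varnothing,y_{k+1},x_{y_{k+1}},y_{k+2},\ldots,x_{y_{k+1},\ldots,y_{k+n-1}},y_{k+n})\in\mathsf A_{k+n}$ for all $(y_{k+1},\ldots,y_{k+n})\in\prod_{r=k+1}^{k+n}\mathcal{Y}_r$. $\mathsf T^{\mathsf A}_{\mathbf v}$ is the set of active trees (of all finite depths) with starting position $\mathbf v$. On it, $\mathbf t'\prec_{\mathbf v}\mathbf t$ iff $\mathbf t$ is obtained from $\mathbf t'$ by removing its leaves (deepest level). A relation is well-founded if every nonempty subset has a minimal element; its rank function is defined by transfinite recursion: $\rho(\mathbf t)=0$ if $\mathbf t$ is minimal, otherwise $\rho(\mathbf t)=\sup\{\rho(\mathbf t')+1:\mathbf t'\prec\mathbf t\}$. Adjoin symbols $-1<$ every ordinal $<\mathsf{\Omega}$. The game value $\mathrm{val}:\mathsf P\to\mathrm{ORD}\cup\{-1,\mathsf\Omega\}$ is: $\mathrm{val}(\mathbf v)=-1$ if $\mathbf v\notin\mathsf A$; $\mathrm{val}(\mathbf v)=\mathsf\Omega$ if $\mathbf v\in\mathsf A$ and $\prec_{\mathbf v}$ is not well-founded; otherwise $\mathrm{val}(\mathbf v)=\rho_{\prec_{\mathbf v}}(\varnothing)$. *)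

theory Defs
  imports "HOL-Analysis.Analysis"
begin

text \<open>Rounds are indexed from 0: round index i (0-based) is round t = i+1 of
the paper.  So X i is the (Polish) space of moves of the adversary in round i+1 and
Y i the countable set of moves of the learner.\<close>

definition Polish_space :: "'a topology \<Rightarrow> bool" where
  "Polish_space T \<longleftrightarrow> completely_metrizable_space T \<and> separable_space T"

definition baire_space :: "(nat \<Rightarrow> nat) topology" where
  "baire_space = product_topology (\<lambda>_. discrete_topology UNIV) UNIV"

text \<open>Analytic subsets of a Polish space (Kechris 14.1): empty, or a continuous image of
the Baire space (equivalently, of some Polish space).  Coanalytic: complement analytic.\<close>
definition analytic_in :: "'a topology \<Rightarrow> 'a set \<Rightarrow> bool" where
  "analytic_in T A \<longleftrightarrow> A \<subseteq> topspace T \<and>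
     (A = {} \<or> (\<exists>f. continuous_map baire_space T f \<and> f ` topspace baire_space = A))"

definition coanalytic_in :: "'a topology \<Rightarrow> 'a set \<Rightarrow> bool" where
  "coanalytic_in T A \<longleftrightarrow> A \<subseteq> topspace T \<and> analytic_in T (topspace T - A)"

definition play_space :: "(nat \<Rightarrow> 'x topology) \<Rightarrow> (nat \<Rightarrow> 'y set) \<Rightarrow> (nat \<Rightarrow> 'x \<times> 'y) topology" where
  "play_space X Y = product_topology (\<lambda>i. prod_topology (X i) (discrete_topology (Y i))) UNIV"

definition plays :: "(nat \<Rightarrow> 'x topology) \<Rightarrow> (nat \<Rightarrow> 'y set) \<Rightarrow> (nat \<Rightarrow> 'x \<times> 'y) set" where
  "plays X Y = {w. \<forall>i. w i \<in> topspace (X i) \<times> Y i}"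

definition positions_n :: "(nat \<Rightarrow> 'x topology) \<Rightarrow> (nat \<Rightarrow> 'y set) \<Rightarrow> nat \<Rightarrow> ('x \<times> 'y) list set" where
  "positions_n X Y n = {v. length v = n \<and> (\<forall>i<n. v ! i \<in> topspace (X i) \<times> Y i)}"

definition positions :: "(nat \<Rightarrow> 'x topology) \<Rightarrow> (nat \<Rightarrow> 'y set) \<Rightarrow> ('x \<times> 'y) list set" where
  "positions X Y = (\<Union>n. positions_n X Y n)"

definition finitely_decidable :: "(nat \<Rightarrow> 'x topology) \<Rightarrow> (nat \<Rightarrow> 'y set) \<Rightarrow> (nat \<Rightarrow> 'x \<times> 'y) set \<Rightarrow> bool" where
  "finitely_decidable X Y W \<longleftrightarrow>
     (\<forall>w\<in>W. \<exists>n. \<forall>w'\<in>plays X Y. (\<forall>i<n. w' i = w i) \<longrightarrow> w' \<in> W)"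

definition learner_strategy :: "(nat \<Rightarrow> 'x topology) \<Rightarrow> (nat \<Rightarrow> 'y set) \<Rightarrow> (('x \<times> 'y) list \<Rightarrow> 'x \<Rightarrow> 'y) \<Rightarrow> bool" where
  "learner_strategy X Y \<sigma> \<longleftrightarrow>
     (\<forall>v x. v \<in> positions_n X Y (length v) \<and> x \<in> topspace (X (length v)) \<longrightarrow> \<sigma> v x \<in> Y (length v))"

definition winning_learner_strategy :: "(nat \<Rightarrow> 'x topology) \<Rightarrow> (nat \<Rightarrow> 'y set) \<Rightarrow> (nat \<Rightarrow> 'x \<times> 'y) set \<Rightarrow> (('x \<times> 'y) list \<Rightarrow> 'x \<Rightarrow> 'y) \<Rightarrow> bool" where
  "winning_learner_strategy X Y W \<sigma> \<longleftrightarrow> learner_strategy X Y \<sigma> \<and>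
     (\<forall>w\<in>plays X Y. (\<forall>i. snd (w i) = \<sigma> (map w [0..<i]) (fst (w i))) \<longrightarrow> w \<in> W)"

definition active :: "(nat \<Rightarrow> 'x topology) \<Rightarrow> (nat \<Rightarrow> 'y set) \<Rightarrow> (nat \<Rightarrow> 'x \<times> 'y) set \<Rightarrow> ('x \<times> 'y) list set" where
  "active X Y W = {v \<in> positions X Y.
     \<exists>w\<in>plays X Y. (\<forall>i<length v. w i = v ! i) \<and> w \<notin> W}"

text \<open>Decision trees with starting position of length k: a pair (n, t) with n the depth and
t a partial map defined exactly on the sequences ys in prod_{j<s} Y (k+j), s < n, with
t ys in X (k + length ys).\<close>
definition ys_seqs :: "(nat \<Rightarrow> 'y set) \<Rightarrow> nat \<Rightarrow> nat \<Rightarrow> 'y list set" where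
  "ys_seqs Y k s = {ys. length ys = s \<and> (\<forall>j<s. ys ! j \<in> Y (k + j))}"

definition decision_trees :: "(nat \<Rightarrow> 'x topology) \<Rightarrow> (nat \<Rightarrow> 'y set) \<Rightarrow> nat \<Rightarrow> (nat \<times> ('y list \<rightharpoonup> 'x)) set" where
  "decision_trees X Y k = {(n, t). dom t = (\<Union>s<n. ys_seqs Y k s) \<and>
      (\<forall>ys\<in>dom t. the (t ys) \<in> topspace (X (k + length ys)))}"

definition tree_path :: "('x \<times> 'y) list \<Rightarrow> ('y list \<rightharpoonup> 'x) \<Rightarrow> 'y list \<Rightarrow> ('x \<times> 'y) list" where
  "tree_path v t ys = v @ map (\<lambda>j. (the (t (take j ys)), ys ! j)) [0..<length ys]"

definition active_trees :: "(nat \<Rightarrow> 'x topology) \<Rightarrow> (nat \<Rightarrow> 'y set) \<Rightarrow> (nat \<Rightarrow> 'x \<times> 'y) set \<Rightarrow> ('x \<times> 'y) list \<Rightarrow> (nat \<times> ('y list \<rightharpoonup> 'x)) set" where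
  "active_trees X Y W v = {(n, t) \<in> decision_trees X Y (length v).
      \<forall>ys\<in>ys_seqs Y (length v) n. tree_path v t ys \<in> active X Y W}"

definition tree_prec :: "(nat \<Rightarrow> 'x topology) \<Rightarrow> (nat \<Rightarrow> 'y set) \<Rightarrow> (nat \<Rightarrow> 'x \<times> 'y) set \<Rightarrow> ('x \<times> 'y) list \<Rightarrow> ((nat \<times> ('y list \<rightharpoonup> 'x)) \<times> (nat \<times> ('y list \<rightharpoonup> 'x))) set" where
  "tree_prec X Y W v = {((n', t'), (n, t)).
      (n', t') \<in> active_trees X Y W v \<and> (n, t) \<in> active_trees X Y W v \<and>
      n' = Suc n \<and> t = t' |` {ys. length ys < n}}"

text \<open>rho is the rank function of the relation R on the set D, with values in the
well-order r (ordinals are represented as elements of the field of a well-order):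
rho x is the r-least element strictly above all rho y with (y, x) in R
(hence the r-least element if x is R-minimal).\<close>
definition rank_fn_into :: "'a set \<Rightarrow> ('a \<times> 'a) set \<Rightarrow> 'o rel \<Rightarrow> ('a \<Rightarrow> 'o) \<Rightarrow> bool" where
  "rank_fn_into D R r \<rho> \<longleftrightarrow> Well_order r \<and>
     (\<forall>x\<in>D. \<rho> x \<in> Field r \<and>
        (\<forall>y. (y, x) \<in> R \<longrightarrow> (\<rho> y, \<rho> x) \<in> r \<and> \<rho> y \<noteq> \<rho> x) \<and>
        (\<forall>b\<in>Field r. (\<forall>y. (y, x) \<in> R \<longrightarrow> (\<rho> y, b) \<in> r \<and> \<rho> y \<noteq> b) \<longrightarrow> (\<rho> x, b) \<in> r))"

definition val_is_Omega :: "(nat \<Rightarrow> 'x topology) \<Rightarrow> (nat \<Rightarrow> 'y set) \<Rightarrow> (nat \<Rightarrow> 'x \<times> 'y) set \<Rightarrow> ('x \<times> 'y) list \<Rightarrow> bool" where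
  "val_is_Omega X Y W v \<longleftrightarrow> v \<in> active X Y W \<and> \<not> wf (tree_prec X Y W v)"

text \<open>val v < omega_1: either val v = -1 (v not active), or v is active, \<prec>_v is
well-founded and its rank is a countable ordinal, i.e. the rank function of \<prec>_v
(on the active trees) takes values in a countable well-order (one on a subset of nat).
Since every active tree lies below the empty tree, this is the same as rank(empty) < omega_1.\<close>
definition val_lt_omega1 :: "(nat \<Rightarrow> 'x topology) \<Rightarrow> (nat \<Rightarrow> 'y set) \<Rightarrow> (nat \<Rightarrow> 'x \<times> 'y) set \<Rightarrow> ('x \<times> 'y) list \<Rightarrow> bool" where
  "val_lt_omega1 X Y W v \<longleftrightarrow> v \<notin> active X Y W \<or>
     (v \<in> active X Y W \<and> wf (tree_prec X Y W v) \<and>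
      (\<exists>(r :: nat rel) \<rho>. rank_fn_into (active_trees X Y W v) (tree_prec X Y W v) r \<rho>))"

end

(* Since W is coanalytic, the losing plays are the image of a continuous map f on Baire space.
   An active decision tree t of depth m from v is witnessed by choosing, for each branch ys of
   length at most m, a point of Baire space whose image under f passes through that branch.
   The first m digits of the witnesses of the first m branches form a code, a finite object,
   and a tree and its one-level extension have compatible codes.  An infinite chain of
   compatible codes converges in Baire space, and by continuity of f and uniqueness of limits
   in the Hausdorff spaces X_t the limiting plays pass through limit trees that are active and
   form an infinite \<prec>_v-descending chain.  So if \<prec>_v is well-founded, so is extension
   of codes, a relation on a countable set; its ranks are countable ordinals and dominate the
   ranks of active trees. *)

theory Submission
  imports Defs
begin

unbundle cardinal_syntax

section \<open>Ranks below \<open>\<omega>\<^sub>1\<close>\<close>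

definition omega1 :: "nat set rel" where
  "omega1 = cardSuc |UNIV :: nat set|"

lemma Card_order_omega1: "Card_order omega1"
  unfolding omega1_def by (simp add: cardSuc_Card_order card_of_Card_order)

lemma Well_order_omega1: "Well_order omega1"
  using Card_order_omega1 by (rule card_order_on_well_order_on)

lemma countable_iff_ordLeq_nat: "countable A \<longleftrightarrow> |A| \<le>o |UNIV :: nat set|"
  unfolding countable_def card_of_ordLeq[symmetric] by auto

lemma uncountable_Field_omega1: "uncountable (Field omega1)"
proof
  assume "countable (Field omega1)"
  then have "omega1 \<le>o |UNIV :: nat set|"
    using card_of_Field_ordIso[OF Card_order_omega1] ordIso_ordLeq_trans ordIso_symmetric
    unfolding countable_iff_ordLeq_nat by blast
  moreover have "|UNIV :: nat set| <o omega1"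
    unfolding omega1_def by (rule cardSuc_greater[OF card_of_Card_order])
  ultimately show False using not_ordLess_ordLeq by blast
qed

lemma countable_under_omega1:
  assumes "a \<in> Field omega1"
  shows "countable (under omega1 a)"
proof -
  have "|underS omega1 a| <o omega1"
    using card_of_underS[OF Card_order_omega1 assms] .
  then have "countable (underS omega1 a)"
    unfolding omega1_def countable_iff_ordLeq_nat
    using cardSuc_ordLeq_ordLess[OF card_of_Card_order card_of_Card_order] by blast
  moreover have "under omega1 a \<subseteq> insert a (underS omega1 a)"
    unfolding under_def underS_def by blast
  ultimately show ?thesis by (meson countable_insert countable_subset)
qed

lemma countable_bounded_omega1:
  assumes "countable K" "K \<subseteq> Field omega1"
  obtains b where "b \<in> Field omega1" "\<And>a. a \<in> K \<Longrightarrow> (a, b) \<in> omega1 \<and> a \<noteq> b"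
proof -
  have wo: "wo_rel omega1" using Well_order_omega1 by (simp add: wo_rel_def)
  have "countable (\<Union>a\<in>K. under omega1 a)"
    using assms countable_under_omega1 by blast
  then obtain b where b: "b \<in> Field omega1" "b \<notin> (\<Union>a\<in>K. under omega1 a)"
    using uncountable_Field_omega1 countable_subset by (metis subsetI)
  then have "(a, b) \<in> omega1 \<and> a \<noteq> b" if "a \<in> K" for a
    using that assms(2) wo_rel.TOTALS[OF wo] wo_rel.REFL[OF wo]
    unfolding under_def refl_on_def by blast
  with b(1) show ?thesis by (rule that)
qed

lemma rank_fn_intoI:
  assumes "Well_order r" "\<And>x. x \<in> D \<Longrightarrow> \<rho> x \<in> Field r"
    and "\<And>x y. x \<in> D \<Longrightarrow> (y, x) \<in> R \<Longrightarrow> (\<rho> y, \<rho> x) \<in> r \<and> \<rho> y \<noteq> \<rho> x"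
    and "\<And>x b. x \<in> D \<Longrightarrow> b \<in> Field r \<Longrightarrow>
      (\<And>y. (y, x) \<in> R \<Longrightarrow> (\<rho> y, b) \<in> r \<and> \<rho> y \<noteq> b) \<Longrightarrow> (\<rho> x, b) \<in> r"
  shows "rank_fn_into D R r \<rho>"
  using assms unfolding rank_fn_into_def by blast

lemma rank_fn_into_Well_order: "rank_fn_into D R r \<rho> \<Longrightarrow> Well_order r"
  unfolding rank_fn_into_def by blast

lemma rank_fn_intoD:
  assumes "rank_fn_into D R r \<rho>" "x \<in> D"
  shows "\<rho> x \<in> Field r"
    and "(y, x) \<in> R \<Longrightarrow> (\<rho> y, \<rho> x) \<in> r"
    and "(y, x) \<in> R \<Longrightarrow> \<rho> y \<noteq> \<rho> x"
    and "b \<in> Field r \<Longrightarrow> (\<And>y. (y, x) \<in> R \<Longrightarrow> (\<rho> y, b) \<in> r \<and> \<rho> y \<noteq> b) \<Longrightarrow> (\<rho> x, b) \<in> r"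
  using assms unfolding rank_fn_into_def by blast+

definition wf_rank_bounds :: "('a \<times> 'a) set \<Rightarrow> 'b rel \<Rightarrow> ('a \<Rightarrow> 'b) \<Rightarrow> 'a \<Rightarrow> 'b set" where
  "wf_rank_bounds R r h x = {b \<in> Field r. \<forall>y. (y, x) \<in> R \<longrightarrow> (h y, b) \<in> r \<and> h y \<noteq> b}"

text \<open>If \<open>r\<close> has no element above all ranks of the \<open>R\<close>-predecessors of \<open>x\<close>, then
  \<open>wf_rank R r x\<close> is the unspecified minimum of the empty set; hence the nonemptiness
  hypotheses below.\<close>
definition wf_rank :: "('a \<times> 'a) set \<Rightarrow> 'b rel \<Rightarrow> 'a \<Rightarrow> 'b" where
  "wf_rank R r = wfrec R (\<lambda>h x. wo_rel.minim r (wf_rank_bounds R r h x))"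

lemma wf_rank_eq:
  assumes "wf R"
  shows "wf_rank R r x = wo_rel.minim r (wf_rank_bounds R r (wf_rank R r) x)"
proof -
  have "wf_rank_bounds R r (cut h R x) x = wf_rank_bounds R r h x" for h
    unfolding wf_rank_bounds_def cut_def by auto
  then show ?thesis
    unfolding wf_rank_def by (subst wfrec[OF assms]) simp
qed

lemma
  assumes "wf R" "Well_order r" "wf_rank_bounds R r (wf_rank R r) x \<noteq> {}"
  shows wf_rank_in_bounds: "wf_rank R r x \<in> wf_rank_bounds R r (wf_rank R r) x"
    and wf_rank_least: "b \<in> wf_rank_bounds R r (wf_rank R r) x \<Longrightarrow> (wf_rank R r x, b) \<in> r"
proof -
  have wo: "wo_rel r" using assms(2) by (simp add: wo_rel_def)
  have sub: "wf_rank_bounds R r (wf_rank R r) x \<subseteq> Field r"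
    unfolding wf_rank_bounds_def by blast
  show "wf_rank R r x \<in> wf_rank_bounds R r (wf_rank R r) x"
    unfolding wf_rank_eq[OF assms(1), of r x] by (rule wo_rel.minim_in[OF wo sub assms(3)])
  show "b \<in> wf_rank_bounds R r (wf_rank R r) x \<Longrightarrow> (wf_rank R r x, b) \<in> r"
    unfolding wf_rank_eq[OF assms(1), of r x] by (rule wo_rel.minim_least[OF wo sub])
qed

lemma rank_fn_into_wf_rank:
  assumes R: "wf R" and r: "Well_order r"
    and bounded: "\<And>x. x \<in> D \<Longrightarrow> wf_rank_bounds R r (wf_rank R r) x \<noteq> {}"
  shows "rank_fn_into D R r (wf_rank R r)"
proof (rule rank_fn_intoI[OF r])
  fix x assume x: "x \<in> D"
  note in_bounds = wf_rank_in_bounds[OF R r bounded[OF x]]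
  then show "wf_rank R r x \<in> Field r" unfolding wf_rank_bounds_def by blast
  show "(wf_rank R r y, wf_rank R r x) \<in> r \<and> wf_rank R r y \<noteq> wf_rank R r x"
    if "(y, x) \<in> R" for y
    using in_bounds that unfolding wf_rank_bounds_def by blast
  fix b assume "b \<in> Field r" "\<And>y. (y, x) \<in> R \<Longrightarrow> (wf_rank R r y, b) \<in> r \<and> wf_rank R r y \<noteq> b"
  then have "b \<in> wf_rank_bounds R r (wf_rank R r) x" unfolding wf_rank_bounds_def by blast
  then show "(wf_rank R r x, b) \<in> r" by (rule wf_rank_least[OF R r bounded[OF x]])
qed

lemma wf_rank_bounds_omega1:
  fixes Q :: "('c::countable \<times> 'c) set"
  assumes "wf Q"
  shows "wf_rank_bounds Q omega1 (wf_rank Q omega1) c \<noteq> {}"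
  using assms
proof (induction c rule: wf_induct_rule)
  case (less c)
  let ?K = "wf_rank Q omega1 ` {d. (d, c) \<in> Q}"
  have "?K \<subseteq> Field omega1"
    using wf_rank_in_bounds[OF assms Well_order_omega1 less.IH]
    unfolding wf_rank_bounds_def by blast
  then obtain b where "b \<in> Field omega1" "\<And>a. a \<in> ?K \<Longrightarrow> (a, b) \<in> omega1 \<and> a \<noteq> b"
    using countable_bounded_omega1[OF countable_image[OF countableI_type]] by blast
  then have "b \<in> wf_rank_bounds Q omega1 (wf_rank Q omega1) c"
    unfolding wf_rank_bounds_def by blast
  then show ?case by blast
qed

lemma wf_rank_le_simulation:
  assumes R: "wf R" and Q: "wf Q" and r: "Well_order r"
    and Q_bounds: "\<And>c. wf_rank_bounds Q r (wf_rank Q r) c \<noteq> {}"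
    and sim: "\<And>c x y. S c x \<Longrightarrow> (y, x) \<in> R \<Longrightarrow> \<exists>c'. S c' y \<and> (c', c) \<in> Q"
    and "S c x"
  shows "wf_rank_bounds R r (wf_rank R r) x \<noteq> {} \<and> (wf_rank R r x, wf_rank Q r c) \<in> r"
  using R \<open>S c x\<close>
proof (induction x arbitrary: c rule: wf_induct_rule)
  case (less x)
  have tr: "trans r" and anti: "antisym r"
    using r unfolding order_on_defs by blast+
  have "wf_rank Q r c \<in> wf_rank_bounds R r (wf_rank R r) x"
    unfolding wf_rank_bounds_def
  proof (intro CollectI conjI allI impI)
    show "wf_rank Q r c \<in> Field r"
      using wf_rank_in_bounds[OF Q r Q_bounds] unfolding wf_rank_bounds_def by blast
  next
    fix y assume yx: "(y, x) \<in> R"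
    then obtain c' where c': "S c' y" "(c', c) \<in> Q" using sim less.prems by blast
    have le: "(wf_rank R r y, wf_rank Q r c') \<in> r" using less.IH[OF yx c'(1)] by blast
    have lt: "(wf_rank Q r c', wf_rank Q r c) \<in> r" "wf_rank Q r c' \<noteq> wf_rank Q r c"
      using wf_rank_in_bounds[OF Q r Q_bounds, of c] c'(2) unfolding wf_rank_bounds_def by blast+
    show "(wf_rank R r y, wf_rank Q r c) \<in> r" using tr le lt(1) by (rule transD)
    show "wf_rank R r y \<noteq> wf_rank Q r c" using anti le lt by (metis antisymD)
  qed
  then show ?case using wf_rank_least[OF R r] by blast
qed

lemma rank_fn_into_Restr:
  assumes rank: "rank_fn_into D R r \<rho>"
    and pred_closed: "\<And>x y. (y, x) \<in> R \<Longrightarrow> x \<in> D \<Longrightarrow> y \<in> D"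
  shows "rank_fn_into D R (Restr r (\<rho> ` D)) \<rho>"
proof (rule rank_fn_intoI)
  have r: "Well_order r" using rank by (rule rank_fn_into_Well_order)
  then show "Well_order (Restr r (\<rho> ` D))" by (rule Well_order_Restr)
  have F: "Field (Restr r (\<rho> ` D)) = \<rho> ` D"
    using r rank_fn_intoD(1)[OF rank] by (intro Refl_Field_Restr2) (auto simp: order_on_defs)
  fix x assume x: "x \<in> D"
  then show "\<rho> x \<in> Field (Restr r (\<rho> ` D))" using F by simp
  show "(\<rho> y, \<rho> x) \<in> Restr r (\<rho> ` D) \<and> \<rho> y \<noteq> \<rho> x" if "(y, x) \<in> R" for y
    using rank_fn_intoD(2,3)[OF rank x that] pred_closed[OF that x] x by simp
  fix b assume "b \<in> Field (Restr r (\<rho> ` D))"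
    and below: "\<And>y. (y, x) \<in> R \<Longrightarrow> (\<rho> y, b) \<in> Restr r (\<rho> ` D) \<and> \<rho> y \<noteq> b"
  then have b: "b \<in> \<rho> ` D" "b \<in> Field r" using F rank_fn_intoD(1)[OF rank] by auto
  have "(\<rho> x, b) \<in> r"
    using rank_fn_intoD(4)[OF rank x b(2)] below by blast
  with x b(1) show "(\<rho> x, b) \<in> Restr r (\<rho> ` D)" by simp
qed

lemma dir_image_mem_iff:
  assumes "inj_on g (Field r)" "a \<in> Field r" "b \<in> Field r"
  shows "(g a, g b) \<in> dir_image r g \<longleftrightarrow> (a, b) \<in> r"
  using assms unfolding dir_image_def inj_on_def Field_def by blast

lemma rank_fn_into_dir_image:
  assumes rank: "rank_fn_into D R r \<rho>" and inj: "inj_on g (Field r)"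
  shows "rank_fn_into D R (dir_image r g) (g \<circ> \<rho>)"
proof (rule rank_fn_intoI)
  show "Well_order (dir_image r g)"
    using rank_fn_into_Well_order[OF rank] inj by (rule Well_order_dir_image)
  have pred_Field: "\<rho> y \<in> Field r" if "x \<in> D" "(y, x) \<in> R" for x y
    using rank_fn_intoD(2)[OF rank that] by (rule FieldI1)
  fix x assume x: "x \<in> D"
  then show "(g \<circ> \<rho>) x \<in> Field (dir_image r g)"
    using rank_fn_intoD(1)[OF rank] by (simp add: dir_image_Field)
  show "((g \<circ> \<rho>) y, (g \<circ> \<rho>) x) \<in> dir_image r g \<and> (g \<circ> \<rho>) y \<noteq> (g \<circ> \<rho>) x"
    if "(y, x) \<in> R" for y
    using rank_fn_intoD(1)[OF rank x] rank_fn_intoD(2,3)[OF rank x that] pred_Field[OF x that] inj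
    by (simp add: dir_image_mem_iff inj_on_eq_iff)
  fix b' assume "b' \<in> Field (dir_image r g)"
    and below: "\<And>y. (y, x) \<in> R \<Longrightarrow> ((g \<circ> \<rho>) y, b') \<in> dir_image r g \<and> (g \<circ> \<rho>) y \<noteq> b'"
  then obtain b where b: "b \<in> Field r" "b' = g b" by (auto simp: dir_image_Field)
  have "(\<rho> x, b) \<in> r"
  proof (rule rank_fn_intoD(4)[OF rank x b(1)])
    fix y assume "(y, x) \<in> R"
    then show "(\<rho> y, b) \<in> r \<and> \<rho> y \<noteq> b"
      using below pred_Field[OF x] b inj by (auto simp: dir_image_mem_iff)
  qed
  then show "((g \<circ> \<rho>) x, b') \<in> dir_image r g"
    using rank_fn_intoD(1)[OF rank x] b inj by (simp add: dir_image_mem_iff)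
qed

lemma rank_fn_into_nat:
  assumes rank: "rank_fn_into D R r \<rho>" and cnt: "countable (\<rho> ` D)"
    and pred_closed: "\<And>x y. (y, x) \<in> R \<Longrightarrow> x \<in> D \<Longrightarrow> y \<in> D"
  shows "\<exists>(r' :: nat rel) \<rho>'. rank_fn_into D R r' \<rho>'"
proof -
  let ?r = "Restr r (\<rho> ` D)"
  have "Field ?r = \<rho> ` D"
    using rank_fn_into_Well_order[OF rank] rank_fn_intoD(1)[OF rank]
    by (intro Refl_Field_Restr2) (auto simp: order_on_defs)
  then have "inj_on (to_nat_on (\<rho> ` D)) (Field ?r)"
    using cnt by (simp add: inj_on_to_nat_on)
  moreover have "rank_fn_into D R ?r \<rho>"
    by (rule rank_fn_into_Restr[OF rank]) (use pred_closed in blast)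
  ultimately show ?thesis by (blast dest: rank_fn_into_dir_image)
qed

theorem countable_rank_of_simulation:
  fixes R :: "('a \<times> 'a) set" and Q :: "('c::countable \<times> 'c) set"
  assumes R: "wf R" and Q: "wf Q"
    and pred_closed: "\<And>x y. (y, x) \<in> R \<Longrightarrow> x \<in> D \<Longrightarrow> y \<in> D"
    and total: "\<And>x. x \<in> D \<Longrightarrow> \<exists>c. S c x"
    and sim: "\<And>c x y. S c x \<Longrightarrow> (y, x) \<in> R \<Longrightarrow> \<exists>c'. S c' y \<and> (c', c) \<in> Q"
  shows "\<exists>(r :: nat rel) \<rho>. rank_fn_into D R r \<rho>"
proof (rule rank_fn_into_nat)
  have le: "wf_rank_bounds R omega1 (wf_rank R omega1) x \<noteq> {} \<and>
      (wf_rank R omega1 x, wf_rank Q omega1 c) \<in> omega1" if "S c x" for c x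
    by (rule wf_rank_le_simulation[where S = S,
          OF R Q Well_order_omega1 wf_rank_bounds_omega1[OF Q] sim that])
  show "rank_fn_into D R omega1 (wf_rank R omega1)"
  proof (rule rank_fn_into_wf_rank[OF R Well_order_omega1])
    fix x assume "x \<in> D"
    with total obtain c where "S c x" by blast
    with le show "wf_rank_bounds R omega1 (wf_rank R omega1) x \<noteq> {}" by blast
  qed
  have "wf_rank R omega1 ` D \<subseteq> (\<Union>c. under omega1 (wf_rank Q omega1 c))"
  proof
    fix a assume "a \<in> wf_rank R omega1 ` D"
    then obtain x c where "a = wf_rank R omega1 x" "S c x" using total by blast
    with le show "a \<in> (\<Union>c. under omega1 (wf_rank Q omega1 c))" unfolding under_def by blast
  qed
  moreover have "wf_rank Q omega1 c \<in> Field omega1" for c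
    using wf_rank_in_bounds[OF Q Well_order_omega1 wf_rank_bounds_omega1[OF Q]]
    unfolding wf_rank_bounds_def by blast
  then have "countable (\<Union>c. under omega1 (wf_rank Q omega1 c))"
    using countable_under_omega1 by (intro countable_UN countableI_type) blast
  ultimately show "countable (wf_rank R omega1 ` D)" by (rule countable_subset)
qed (rule pred_closed)

section \<open>Decision trees, plays and Baire space\<close>

lemma tree_path_length [simp]: "length (tree_path v t ys) = length v + length ys"
  unfolding tree_path_def by simp

lemma tree_path_nth_position: "i < length v \<Longrightarrow> tree_path v t ys ! i = v ! i"
  unfolding tree_path_def by (simp add: nth_append)

lemma tree_path_nth_move:
  "l < length ys \<Longrightarrow> tree_path v t ys ! (length v + l) = (the (t (take l ys)), ys ! l)"
  unfolding tree_path_def by (simp add: nth_append)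

lemma tree_path_take:
  assumes "l \<le> length ys"
  shows "tree_path v t (take l ys) = take (length v + l) (tree_path v t ys)"
  using assms unfolding tree_path_def by (auto simp: take_map min_def intro!: map_cong)

lemma tree_path_cong:
  "(\<And>j. j < length ys \<Longrightarrow> t (take j ys) = t' (take j ys)) \<Longrightarrow> tree_path v t ys = tree_path v t' ys"
  unfolding tree_path_def by simp

lemma topspace_play_space: "topspace (play_space X Y) = plays X Y"
  unfolding play_space_def plays_def by (auto simp: PiE_def extensional_def)

lemma topspace_baire_space: "topspace baire_space = UNIV"
  unfolding baire_space_def by (auto simp: PiE_def extensional_def)

lemma losing_prefix_active:
  assumes "w \<in> plays X Y" "w \<notin> W"
  shows "map w [0..<n] \<in> active X Y W"
  using assms unfolding active_def positions_def positions_n_def plays_def by auto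

lemma limitin_baire_space_stabilizing:
  assumes "\<And>n j. J n \<le> j \<Longrightarrow> g (Suc j) n = g j n"
  shows "limitin baire_space g (\<lambda>n. g (J n) n) sequentially"
proof -
  have "g j n = g (J n) n" if "J n \<le> j" for n j
    using that by (induction j rule: dec_induct) (simp_all add: assms)
  then have "\<forall>\<^sub>F j in sequentially. g j n = g (J n) n" for n
    unfolding eventually_sequentially by blast
  then show ?thesis
    unfolding baire_space_def limitin_componentwise
    by (auto simp: PiE_def extensional_def intro: limitin_eventually)
qed

section \<open>Codes of active decision trees\<close>

locale losing_plays_parametrization =
  fixes X :: "nat \<Rightarrow> 'x topology" and Y :: "nat \<Rightarrow> 'y set"
    and W :: "(nat \<Rightarrow> 'x \<times> 'y) set" and v :: "('x \<times> 'y) list"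
    and f :: "(nat \<Rightarrow> nat) \<Rightarrow> nat \<Rightarrow> 'x \<times> 'y"
  assumes Hausdorff: "\<And>i. Hausdorff_space (X i)"
    and countable_moves: "\<And>i. countable (Y i)"
    and continuous: "continuous_map baire_space (play_space X Y) f"
    and range_losing: "range f = plays X Y - W"
    and position: "v \<in> positions X Y"
begin

abbreviation k :: nat where "k \<equiv> length v"

definition move_seqs :: "'y list set" where
  "move_seqs = (\<Union>s. ys_seqs Y k s)"

definition seq_of_nat :: "nat \<Rightarrow> 'y list" where
  "seq_of_nat = from_nat_into move_seqs"

definition witnessed_by :: "nat \<Rightarrow> ('y list \<rightharpoonup> 'x) \<Rightarrow> ('y list \<Rightarrow> nat \<Rightarrow> nat) \<Rightarrow> bool" where
  "witnessed_by m t \<beta> \<longleftrightarrow>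
     (\<forall>ys\<in>move_seqs. length ys \<le> m \<longrightarrow> map (f (\<beta> ys)) [0..<k + length ys] = tree_path v t ys)"

text \<open>Sequences longer than \<open>m\<close> are blanked out, so that a witness for a deeper tree which
  agrees with \<open>\<beta>\<close> on short sequences yields an extension of the code.\<close>
definition code :: "nat \<Rightarrow> ('y list \<Rightarrow> nat \<Rightarrow> nat) \<Rightarrow> nat list list" where
  "code m \<beta> =
     map (\<lambda>i. if length (seq_of_nat i) \<le> m then map (\<beta> (seq_of_nat i)) [0..<m] else []) [0..<m]"

definition codes :: "nat list list \<Rightarrow> nat \<times> ('y list \<rightharpoonup> 'x) \<Rightarrow> bool" where
  "codes cs x \<longleftrightarrow> x \<in> active_trees X Y W v \<and>
     (\<exists>\<beta>. witnessed_by (fst x) (snd x) \<beta> \<and> cs = code (fst x) \<beta>)"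

definition code_succ :: "(nat list list \<times> nat list list) set" where
  "code_succ = {(cs', cs). length cs' = Suc (length cs) \<and>
      (\<forall>i<length cs. take (length (cs ! i)) (cs' ! i) = cs ! i) \<and> (\<exists>x. codes cs' x)}"

lemma losing_play: "f b \<in> plays X Y" "f b \<notin> W"
  using range_losing by blast+

lemma moves_nonempty: "Y i \<noteq> {}"
  using losing_play(1) unfolding plays_def by blast

lemma active_prefix_of_losing_play:
  assumes "p \<in> active X Y W"
  obtains b where "p = map (f b) [0..<length p]"
proof -
  from assms obtain w where w: "w \<in> plays X Y" "w \<notin> W" "\<forall>i<length p. w i = p ! i"
    unfolding active_def by blast
  then obtain b where "w = f b" using range_losing by blast
  with w(3) have "p = map (f b) [0..<length p]" by (simp add: nth_equalityI)
  then show thesis by (rule that)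
qed

lemma move_seqs_iff: "ys \<in> move_seqs \<longleftrightarrow> (\<forall>j<length ys. ys ! j \<in> Y (k + j))"
  unfolding move_seqs_def ys_seqs_def by auto

lemma ys_seqs_eq: "ys_seqs Y k m = {ys \<in> move_seqs. length ys = m}"
  unfolding move_seqs_def ys_seqs_def by auto

lemma countable_move_seqs: "countable move_seqs"
proof (rule countable_subset)
  show "move_seqs \<subseteq> lists (\<Union>j. Y j)"
  proof
    fix ys assume "ys \<in> move_seqs"
    then show "ys \<in> lists (\<Union>j. Y j)" by (auto simp: move_seqs_iff in_set_conv_nth) blast
  qed
  show "countable (lists (\<Union>j. Y j))"
    using countable_moves by auto
qed

lemma seq_of_nat_to_nat_on: "ys \<in> move_seqs \<Longrightarrow> seq_of_nat (to_nat_on move_seqs ys) = ys"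
  unfolding seq_of_nat_def using countable_move_seqs by simp

lemma move_seqs_take: "ys \<in> move_seqs \<Longrightarrow> take l ys \<in> move_seqs"
  unfolding move_seqs_iff by simp

lemma move_seqs_extend:
  assumes "ys \<in> move_seqs" "length ys \<le> m"
  obtains ys' where "ys' \<in> ys_seqs Y k m" "take (length ys) ys' = ys"
  using assms(2)
proof (induction m arbitrary: thesis)
  case 0
  with assms(1) show ?case by (simp add: ys_seqs_eq)
next
  case (Suc m)
  show ?case
  proof (cases "length ys = Suc m")
    case True
    with assms(1) show ?thesis by (intro Suc.prems(1)[of ys]) (simp_all add: ys_seqs_eq)
  next
    case False
    with Suc.prems(2) have "length ys \<le> m" by simp
    obtain ys'' where ys'': "ys'' \<in> ys_seqs Y k m" "take (length ys) ys'' = ys"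
      by (rule Suc.IH[OF _ \<open>length ys \<le> m\<close>]) blast
    obtain y where "y \<in> Y (k + m)" using moves_nonempty by blast
    with ys'' have "ys'' @ [y] \<in> ys_seqs Y k (Suc m)"
      unfolding ys_seqs_def by (auto simp: nth_append less_Suc_eq)
    moreover have "take (length ys) (ys'' @ [y]) = ys"
      using ys'' Suc.prems(2) False by (simp add: ys_seqs_def)
    ultimately show ?thesis by (rule Suc.prems(1))
  qed
qed

lemma witnessed_by_mono: "witnessed_by m t \<beta> \<Longrightarrow> m' \<le> m \<Longrightarrow> witnessed_by m' t \<beta>"
  unfolding witnessed_by_def by auto

lemma active_tree_witnessed:
  assumes "(m, t) \<in> active_trees X Y W v"
  obtains \<beta> where "witnessed_by m t \<beta>"
proof -
  have "\<exists>b. map (f b) [0..<k + length ys] = tree_path v t ys"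
    if ys: "ys \<in> move_seqs" "length ys \<le> m" for ys
  proof -
    obtain ys' where ys': "ys' \<in> ys_seqs Y k m" "take (length ys) ys' = ys"
      using move_seqs_extend[OF ys] .
    then have len: "length ys' = m" by (simp add: ys_seqs_def)
    have "tree_path v t ys' \<in> active X Y W"
      using assms ys'(1) unfolding active_trees_def by blast
    then obtain b where b: "tree_path v t ys' = map (f b) [0..<k + m]"
      using len by (metis active_prefix_of_losing_play tree_path_length)
    have "tree_path v t ys = take (k + length ys) (tree_path v t ys')"
      using tree_path_take[of "length ys" ys' v t] ys'(2) ys(2) len by simp
    also have "\<dots> = map (f b) [0..<k + length ys]"
      using b ys(2) by (simp add: take_map)
    finally show ?thesis by metis
  qed
  then obtain \<beta> where "witnessed_by m t \<beta>"
    unfolding witnessed_by_def by metis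
  then show thesis by (rule that)
qed

lemma codes_exist: "x \<in> active_trees X Y W v \<Longrightarrow> \<exists>cs. codes cs x"
  unfolding codes_def by (metis active_tree_witnessed prod.collapse)

lemma code_length [simp]: "length (code m \<beta>) = m"
  unfolding code_def by simp

lemma code_nth:
  "i < m \<Longrightarrow>
    code m \<beta> ! i = (if length (seq_of_nat i) \<le> m then map (\<beta> (seq_of_nat i)) [0..<m] else [])"
  unfolding code_def by (simp del: upt_Suc)

lemma witnessed_by_extend:
  assumes prec: "((m', t'), (m, t)) \<in> tree_prec X Y W v" and \<beta>: "witnessed_by m t \<beta>"
  obtains \<beta>' where "witnessed_by m' t' \<beta>'" "\<And>ys. length ys \<le> m \<Longrightarrow> \<beta>' ys = \<beta> ys"
proof -
  from prec have m': "m' = Suc m" and t: "t = t' |` {ys. length ys < m}"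
    and act: "(m', t') \<in> active_trees X Y W v"
    unfolding tree_prec_def by auto
  obtain \<gamma> where \<gamma>: "witnessed_by m' t' \<gamma>" using active_tree_witnessed[OF act] .
  define \<beta>' where "\<beta>' ys = (if length ys \<le> m then \<beta> ys else \<gamma> ys)" for ys
  have "tree_path v t' ys = tree_path v t ys" if "length ys \<le> m" for ys
    using that t by (intro tree_path_cong) (simp add: restrict_map_def)
  then have "witnessed_by m' t' \<beta>'"
    using \<beta> \<gamma> unfolding witnessed_by_def \<beta>'_def by auto
  then show thesis by (rule that) (simp add: \<beta>'_def)
qed

lemma code_succ_code:
  assumes agree: "\<And>ys. length ys \<le> m \<Longrightarrow> \<beta>' ys = \<beta> ys" and "codes (code (Suc m) \<beta>') x"
  shows "(code (Suc m) \<beta>', code m \<beta>) \<in> code_succ"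
  unfolding code_succ_def
proof (intro CollectI case_prodI conjI allI impI exI)
  fix i assume "i < length (code m \<beta>)"
  then show "take (length (code m \<beta> ! i)) (code (Suc m) \<beta>' ! i) = code m \<beta> ! i"
    using agree by (auto simp: code_nth take_map simp del: upt_Suc)
qed (use assms in simp_all)

lemma codes_step:
  assumes cs: "codes cs x" and prec: "(y, x) \<in> tree_prec X Y W v"
  obtains cs' where "codes cs' y" "(cs', cs) \<in> code_succ"
proof -
  obtain m t m' t' where x: "x = (m, t)" and y: "y = (m', t')" by force
  from cs obtain \<beta> where \<beta>: "witnessed_by m t \<beta>" and cs_eq: "cs = code m \<beta>"
    unfolding codes_def x by auto
  obtain \<beta>' where \<beta>': "witnessed_by m' t' \<beta>'" "\<And>ys. length ys \<le> m \<Longrightarrow> \<beta>' ys = \<beta> ys"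
    using witnessed_by_extend prec \<beta> unfolding x y by blast
  from prec have m': "m' = Suc m" and "y \<in> active_trees X Y W v"
    unfolding tree_prec_def x y by auto
  with \<beta>'(1) have codes': "codes (code m' \<beta>') y"
    unfolding codes_def y by auto
  then have "(code m' \<beta>', cs) \<in> code_succ"
    unfolding cs_eq m' using code_succ_code[of m \<beta>' \<beta>] \<beta>'(2) by blast
  with codes' show thesis by (rule that)
qed

lemma code_succ_agree:
  assumes succ: "(code m' \<beta>', code m \<beta>) \<in> code_succ"
    and "i < m" "length (seq_of_nat i) \<le> m" "n < m"
  shows "\<beta>' (seq_of_nat i) n = \<beta> (seq_of_nat i) n"
proof -
  have "m' = Suc m" using succ unfolding code_succ_def by simp
  then have "take m (map (\<beta>' (seq_of_nat i)) [0..<Suc m]) = map (\<beta> (seq_of_nat i)) [0..<m]"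
    using succ assms(2,3) unfolding code_succ_def by (auto simp: code_nth simp del: upt_Suc)
  then have "\<forall>x\<in>set [0..<m]. \<beta>' (seq_of_nat i) x = \<beta> (seq_of_nat i) x"
    by (simp add: take_map take_upt map_eq_conv del: upt_Suc)
  then show ?thesis using assms(4) by simp
qed

end

section \<open>Limits of witnessed trees\<close>

locale witnessed_sequence = losing_plays_parametrization X Y W v f
  for X :: "nat \<Rightarrow> 'x topology" and Y :: "nat \<Rightarrow> 'y set"
    and W :: "(nat \<Rightarrow> 'x \<times> 'y) set" and v :: "('x \<times> 'y) list"
    and f :: "(nat \<Rightarrow> nat) \<Rightarrow> nat \<Rightarrow> 'x \<times> 'y" +
  fixes t :: "nat \<Rightarrow> 'y list \<rightharpoonup> 'x" and \<beta> :: "nat \<Rightarrow> 'y list \<Rightarrow> nat \<Rightarrow> nat"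
    and \<alpha> :: "'y list \<Rightarrow> nat \<Rightarrow> nat"
  assumes witnessed: "\<And>j. witnessed_by j (t j) (\<beta> j)"
    and converges: "\<And>ys. ys \<in> move_seqs \<Longrightarrow> limitin baire_space (\<lambda>j. \<beta> j ys) (\<alpha> ys) sequentially"
begin

text \<open>The node at \<open>zs\<close> is read off the limit play of a one-step extension of \<open>zs\<close>; by
  uniqueness of limits it does not matter which one.\<close>
definition limit_node :: "'y list \<Rightarrow> 'x" where
  "limit_node zs = fst (f (\<alpha> (zs @ [SOME y. y \<in> Y (k + length zs)])) (k + length zs))"

definition limit_tree :: "nat \<Rightarrow> nat \<times> ('y list \<rightharpoonup> 'x)" where
  "limit_tree N = (N, (\<lambda>zs. Some (limit_node zs)) |` {zs \<in> move_seqs. length zs < N})"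

lemma coordinate_converges:
  assumes "ys \<in> move_seqs"
  shows "limitin (prod_topology (X i) (discrete_topology (Y i))) (\<lambda>j. f (\<beta> j ys) i) (f (\<alpha> ys) i)
      sequentially"
proof -
  have "limitin (play_space X Y) (f \<circ> (\<lambda>j. \<beta> j ys)) (f (\<alpha> ys)) sequentially"
    by (rule continuous_map_limit[OF continuous converges[OF assms]])
  then show ?thesis unfolding play_space_def limitin_componentwise by (simp add: o_def)
qed

lemma eventually_on_path:
  assumes "ys \<in> move_seqs" "i < k + length ys"
  shows "\<forall>\<^sub>F j in sequentially. f (\<beta> j ys) i = tree_path v (t j) ys ! i"
proof -
  have "f (\<beta> j ys) i = tree_path v (t j) ys ! i" if "length ys \<le> j" for j
  proof -
    have "map (f (\<beta> j ys)) [0..<k + length ys] = tree_path v (t j) ys"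
      using witnessed[of j] assms(1) that unfolding witnessed_by_def by blast
    then show ?thesis using assms(2) by (metis add_0 diff_zero nth_map_upt)
  qed
  then show ?thesis unfolding eventually_sequentially by blast
qed

lemma limit_node_converges:
  assumes "zs \<in> move_seqs"
  shows "limitin (X (k + length zs)) (\<lambda>j. the (t j zs)) (limit_node zs) sequentially"
proof -
  define y where "y = (SOME y. y \<in> Y (k + length zs))"
  let ?p = "k + length zs"
  have "y \<in> Y ?p" unfolding y_def using moves_nonempty by (simp add: some_in_eq)
  with assms have ext: "zs @ [y] \<in> move_seqs"
    unfolding move_seqs_iff by (auto simp: nth_append less_Suc_eq)
  have lim: "limitin (X ?p) (\<lambda>j. fst (f (\<beta> j (zs @ [y])) ?p)) (limit_node zs) sequentially"
    using coordinate_converges[OF ext, of ?p]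
    unfolding limitin_pairwise limit_node_def y_def by (simp add: o_def)
  have "\<forall>\<^sub>F j in sequentially. fst (f (\<beta> j (zs @ [y])) ?p) = the (t j zs)"
    using eventually_on_path[OF ext, of ?p]
    by (auto elim!: eventually_mono simp: tree_path_nth_move[of "length zs" "zs @ [y]"])
  then show ?thesis using lim by (rule limitin_transform_eventually)
qed

lemma path_converges:
  assumes "ys \<in> move_seqs" "i < k + length ys"
  shows "limitin (prod_topology (X i) (discrete_topology (Y i))) (\<lambda>j. tree_path v (t j) ys ! i)
      (tree_path v (\<lambda>zs. Some (limit_node zs)) ys ! i) sequentially"
proof (cases "i < k")
  case True
  then have "v ! i \<in> topspace (X i) \<times> Y i"
    using position unfolding positions_def positions_n_def by auto
  with True show ?thesis by (simp add: tree_path_nth_position)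
next
  case False
  then obtain l where i: "i = k + l" and l: "l < length ys"
    using assms(2) by (metis add_less_cancel_left le_add_diff_inverse not_less)
  have "ys ! l \<in> Y i" using assms(1) l unfolding move_seqs_iff i by simp
  moreover have "limitin (X i) (\<lambda>j. the (t j (take l ys))) (limit_node (take l ys)) sequentially"
    using limit_node_converges[OF move_seqs_take[OF assms(1)], of l] l unfolding i by simp
  ultimately show ?thesis
    unfolding i using l by (simp add: tree_path_nth_move limitin_pairwise o_def)
qed

lemma limit_play_on_path:
  assumes "ys \<in> move_seqs"
  shows "map (f (\<alpha> ys)) [0..<k + length ys] = tree_path v (\<lambda>zs. Some (limit_node zs)) ys"
proof (rule nth_equalityI)
  fix i assume "i < length (map (f (\<alpha> ys)) [0..<k + length ys])"
  then have i: "i < k + length ys" by simp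
  have "limitin (prod_topology (X i) (discrete_topology (Y i))) (\<lambda>j. tree_path v (t j) ys ! i)
      (f (\<alpha> ys) i) sequentially"
    using eventually_on_path[OF assms i] coordinate_converges[OF assms]
    by (rule limitin_transform_eventually)
  then have "f (\<alpha> ys) i = tree_path v (\<lambda>zs. Some (limit_node zs)) ys ! i"
    using path_converges[OF assms i] trivial_limit_sequentially
    by (rule limitin_Hausdorff_unique) (simp add: Hausdorff Hausdorff_space_prod_topology)
  with i show "map (f (\<alpha> ys)) [0..<k + length ys] ! i =
      tree_path v (\<lambda>zs. Some (limit_node zs)) ys ! i"
    by simp
qed simp

lemma limit_tree_active: "limit_tree N \<in> active_trees X Y W v"
proof -
  let ?t = "(\<lambda>zs. Some (limit_node zs)) |` {zs \<in> move_seqs. length zs < N}"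
  have "fst (f b p) \<in> topspace (X p)" for b p
    using losing_play(1) unfolding plays_def by (simp add: mem_Times_iff)
  then have node: "limit_node zs \<in> topspace (X (k + length zs))" for zs
    unfolding limit_node_def by blast
  have "(N, ?t) \<in> decision_trees X Y k"
    unfolding decision_trees_def
  proof (intro CollectI case_prodI conjI ballI)
    show "dom ?t = (\<Union>s<N. ys_seqs Y k s)" by (auto simp: ys_seqs_eq)
  next
    fix ys assume "ys \<in> dom ?t"
    then show "the (?t ys) \<in> topspace (X (k + length ys))"
      using node by (auto simp: restrict_map_def dom_def split: if_splits)
  qed
  moreover have "tree_path v ?t ys \<in> active X Y W" if ys: "ys \<in> ys_seqs Y k N" for ys
  proof -
    have ys': "ys \<in> move_seqs" "length ys = N" using ys unfolding ys_seqs_eq by auto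
    then have "tree_path v ?t ys = tree_path v (\<lambda>zs. Some (limit_node zs)) ys"
      by (intro tree_path_cong) (simp add: move_seqs_take)
    also have "\<dots> = map (f (\<alpha> ys)) [0..<k + length ys]"
      by (rule limit_play_on_path[OF ys'(1), symmetric])
    finally show ?thesis by (simp add: losing_prefix_active losing_play)
  qed
  ultimately show ?thesis unfolding limit_tree_def active_trees_def by blast
qed

lemma limit_tree_prec: "(limit_tree (Suc N), limit_tree N) \<in> tree_prec X Y W v"
proof -
  have "{zs \<in> move_seqs. length zs < Suc N} \<inter> {zs. length zs < N} = {zs \<in> move_seqs. length zs < N}"
    by auto
  then show ?thesis
    using limit_tree_active unfolding tree_prec_def by (simp add: limit_tree_def)
qed

lemma not_wf_tree_prec: "\<not> wf (tree_prec X Y W v)"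
  using limit_tree_prec unfolding wf_iff_no_infinite_down_chain by blast

end

context losing_plays_parametrization
begin

lemma code_succ_chain_witnessed:
  assumes c: "\<And>j. (c (Suc j), c j) \<in> code_succ"
  obtains m t \<beta> where "\<And>j. j < m j" "\<And>j. witnessed_by (m j) (t j) (\<beta> j)"
    "\<And>j. c (Suc j) = code (m j) (\<beta> j)"
proof -
  define m where "m j = length (c (Suc j))" for j
  have len: "j \<le> length (c j)" for j
    using c by (induction j) (auto simp: code_succ_def)
  have depth: "j < m j" for j
    unfolding m_def using c[of j] len[of j] by (auto simp: code_succ_def)
  have "\<exists>t\<beta>. witnessed_by (m j) (fst t\<beta>) (snd t\<beta>) \<and> c (Suc j) = code (m j) (snd t\<beta>)" for j
  proof -
    from c[of j] obtain x where "codes (c (Suc j)) x" unfolding code_succ_def by blast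
    then obtain \<beta> where "witnessed_by (fst x) (snd x) \<beta>" "c (Suc j) = code (fst x) \<beta>"
      unfolding codes_def by blast
    moreover from this have "fst x = m j" unfolding m_def by simp
    ultimately show ?thesis by (metis fst_conv snd_conv)
  qed
  then obtain t\<beta> where "\<And>j. witnessed_by (m j) (fst (t\<beta> j)) (snd (t\<beta> j))"
    and "\<And>j. c (Suc j) = code (m j) (snd (t\<beta> j))"
    by metis
  with depth show thesis by (rule that)
qed

lemma wf_code_succ:
  assumes wf_prec: "wf (tree_prec X Y W v)"
  shows "wf code_succ"
proof (rule ccontr)
  assume "\<not> wf code_succ"
  then obtain c where c: "\<And>j. (c (Suc j), c j) \<in> code_succ"
    unfolding wf_iff_no_infinite_down_chain by blast
  obtain m t \<beta> where depth: "\<And>j. j < m j" and witnessed: "\<And>j. witnessed_by (m j) (t j) (\<beta> j)"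
    and coded: "\<And>j. c (Suc j) = code (m j) (\<beta> j)"
    using code_succ_chain_witnessed[of c] c by blast
  \<comment> \<open>From stage \<open>J ys n\<close> on, digit \<open>n\<close> of the witness for \<open>ys\<close> is recorded in the
    codes, so it no longer changes.\<close>
  define J where "J ys n = to_nat_on move_seqs ys + length ys + n" for ys n
  have stable: "\<beta> (Suc j) ys n = \<beta> j ys n" if ys: "ys \<in> move_seqs" and "J ys n \<le> j" for ys n j
  proof -
    have "(code (m (Suc j)) (\<beta> (Suc j)), code (m j) (\<beta> j)) \<in> code_succ"
      using c[of "Suc j"] unfolding coded .
    from code_succ_agree[OF this, of "to_nat_on move_seqs ys" n] show ?thesis
      using depth[of j] \<open>J ys n \<le> j\<close> seq_of_nat_to_nat_on[OF ys] unfolding J_def by simp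
  qed
  have "witnessed_sequence X Y W v f t \<beta> (\<lambda>ys n. \<beta> (J ys n) ys n)"
  proof (intro witnessed_sequence.intro witnessed_sequence_axioms.intro
      losing_plays_parametrization_axioms)
    show "witnessed_by j (t j) (\<beta> j)" for j
      using witnessed_by_mono[OF witnessed] depth less_imp_le by blast
    show "limitin baire_space (\<lambda>j. \<beta> j ys) (\<lambda>n. \<beta> (J ys n) ys n) sequentially"
      if "ys \<in> move_seqs" for ys
      using stable[OF that] by (rule limitin_baire_space_stabilizing)
  qed
  then show False using witnessed_sequence.not_wf_tree_prec wf_prec by blast
qed

lemma tree_prec_countable_rank:
  assumes "wf (tree_prec X Y W v)"
  shows "\<exists>(r :: nat rel) \<rho>. rank_fn_into (active_trees X Y W v) (tree_prec X Y W v) r \<rho>"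
proof (rule countable_rank_of_simulation[where S = codes, OF assms wf_code_succ[OF assms]])
  show "\<And>x y. (y, x) \<in> tree_prec X Y W v \<Longrightarrow> y \<in> active_trees X Y W v"
    unfolding tree_prec_def by blast
qed (use codes_exist codes_step in blast)+

end

theorem mainTheorem15:
  fixes X :: "nat \<Rightarrow> 'x topology" and Y :: "nat \<Rightarrow> 'y set"
    and W :: "(nat \<Rightarrow> 'x \<times> 'y) set"
  assumes polish: "\<And>i. Polish_space (X i)"
    and countable: "\<And>i. countable (Y i)"
    and coanalytic: "coanalytic_in (play_space X Y) W"
    and fin_dec: "finitely_decidable X Y W"
    and winning: "\<exists>\<sigma>. winning_learner_strategy X Y W \<sigma>"
    and v: "v \<in> positions X Y"
  shows "val_is_Omega X Y W v \<or> val_lt_omega1 X Y W v"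
proof (cases "v \<in> active X Y W \<and> wf (tree_prec X Y W v)")
  case False
  then show ?thesis unfolding val_is_Omega_def val_lt_omega1_def by blast
next
  case True
  then have "plays X Y - W \<noteq> {}" unfolding active_def by blast
  with coanalytic obtain f where "continuous_map baire_space (play_space X Y) f"
      "range f = plays X Y - W"
    unfolding coanalytic_in_def analytic_in_def topspace_play_space topspace_baire_space by auto
  moreover have "Hausdorff_space (X i)" for i
    using polish unfolding Polish_space_def
    by (simp add: completely_metrizable_imp_metrizable_space metrizable_imp_Hausdorff_space)
  ultimately interpret losing_plays_parametrization X Y W v f
    using countable v by unfold_locales
  show ?thesis using tree_prec_countable_rank True unfolding val_lt_omega1_def by blast
qed

end
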